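(* Let $G=(V,E)$ be a graph and $v\in V$. Then $v\in \mathrm{anticore}(G)$ if and only if $\gamma(G_v+u)=\gamma(G)+1$.
   Context: All graphs are finite, simple and undirected. A set $S\subseteq V$ is dominating if every vertex of $V$ is in $S$ or adjacent to a vertex of $S$; $\gamma(G)$ is the minimum size of a dominating set, and a minimum dominating set (mds, or $\gamma$-set) is a dominating set of size $\gamma(G)$. $\mathrm{core}(G)$ is the set of vertices belonging to every mds of $G$, $\mathrm{corona}(G)$ is the set of vertices belonging to at least one mds of $G$, and $\mathrm{anticore}(G)=V\setminus \mathrm{corona}(G)$. For $v\in V$, $G_v+u$ denotes the graph obtained from $G$ by adding one new vertex $u$ and the single edge $uv$. *)

theory Defs
  imports Main
begin

definition graph :: "'a set \<Rightarrow> 'a set set \<Rightarrow> bool" where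
  "graph V E \<longleftrightarrow> finite V \<and> (\<forall>e\<in>E. \<exists>x y. x \<in> V \<and> y \<in> V \<and> x \<noteq> y \<and> e = {x, y})"

definition adjacent :: "'a set set \<Rightarrow> 'a \<Rightarrow> 'a \<Rightarrow> bool" where
  "adjacent E x y \<longleftrightarrow> {x, y} \<in> E"

definition dominating :: "'a set \<Rightarrow> 'a set set \<Rightarrow> 'a set \<Rightarrow> bool" where
  "dominating V E S \<longleftrightarrow> S \<subseteq> V \<and> (\<forall>w\<in>V. w \<in> S \<or> (\<exists>s\<in>S. adjacent E w s))"

definition domination_number :: "'a set \<Rightarrow> 'a set set \<Rightarrow> nat" where
  "domination_number V E = Min (card ` {S. dominating V E S})"

definition mds :: "'a set \<Rightarrow> 'a set set \<Rightarrow> 'a set \<Rightarrow> bool" where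
  "mds V E S \<longleftrightarrow> dominating V E S \<and> card S = domination_number V E"

definition corona :: "'a set \<Rightarrow> 'a set set \<Rightarrow> 'a set" where
  "corona V E = {x \<in> V. \<exists>S. mds V E S \<and> x \<in> S}"

definition anticore :: "'a set \<Rightarrow> 'a set set \<Rightarrow> 'a set" where
  "anticore V E = V - corona V E"

end

theory Submission
  imports Defs
begin

text \<open>Adding a pendant vertex u at v raises \<gamma> by at most one (add u to an mds of G),
  and never lowers it: from a dominating set D of G_v+u, the set obtained by replacing u
  by v dominates G, contains v and is no larger than D, because D must contain u or v to
  dominate u. Hence \<gamma>(G_v+u) = \<gamma>(G) exactly when G has a dominating set of size \<gamma>(G)
  containing v, i.e. when v lies in the corona.\<close>

lemma graph_edge_in_vertices:
  assumes "graph V E" "{x, y} \<in> E"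
  shows "x \<in> V"
proof -
  obtain a b where "a \<in> V" "b \<in> V" "{x, y} = {a, b}"
    using assms unfolding graph_def by blast
  then show ?thesis by (auto simp: doubleton_eq_iff)
qed

lemma finite_dominating_sets:
  assumes "finite V"
  shows "finite {S. dominating V E S}"
  using assms by (auto simp: dominating_def intro: finite_subset[of _ "Pow V"])

lemma domination_number_le_card:
  assumes "finite V" "dominating V E S"
  shows "domination_number V E \<le> card S"
  using assms finite_dominating_sets unfolding domination_number_def
  by (intro Min_le finite_imageI) auto

lemma mds_exists:
  assumes "finite V"
  shows "\<exists>S. mds V E S"
proof -
  have "dominating V E V" by (auto simp: dominating_def)
  then have "card ` {S. dominating V E S} \<noteq> {}" by auto
  from Min_in[OF finite_imageI[OF finite_dominating_sets[OF assms]] this] show ?thesis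
    unfolding mds_def domination_number_def by auto
qed

lemma mds_iff_card_le:
  assumes "finite V"
  shows "mds V E S \<longleftrightarrow> dominating V E S \<and> card S \<le> domination_number V E"
  using domination_number_le_card[OF assms] unfolding mds_def by (auto intro: antisym)

lemma dominating_pendant_insert_pendant:
  assumes "dominating V E S"
  shows "dominating (insert u V) (insert {u, v} E) (insert u S)"
  using assms unfolding dominating_def adjacent_def by blast

lemma dominating_pendant_if_contains_root:
  assumes "dominating V E S" "v \<in> S"
  shows "dominating (insert u V) (insert {u, v} E) S"
  using assms unfolding dominating_def adjacent_def by blast

lemma dominating_pendant_contains_pendant_or_root:
  assumes "dominating (insert u V) (insert {u, v} E) D" "graph V E" "u \<notin> V"
  shows "u \<in> D \<or> v \<in> D"
proof (rule ccontr)
  assume "\<not> (u \<in> D \<or> v \<in> D)"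
  moreover obtain t where "t \<in> D" "{u, t} \<in> insert {u, v} E"
    using assms(1) calculation unfolding dominating_def adjacent_def by blast
  ultimately have "{u, t} \<in> E" by (auto simp: doubleton_eq_iff)
  then show False using graph_edge_in_vertices[OF assms(2)] assms(3) by blast
qed

lemma dominating_replace_pendant_by_root:
  assumes g: "graph V E" and "u \<notin> V" "v \<in> V"
    and D: "dominating (insert u V) (insert {u, v} E) D"
  shows "dominating V E (insert v (D - {u}))"
  unfolding dominating_def adjacent_def
proof (intro conjI ballI)
  show "insert v (D - {u}) \<subseteq> V" using D \<open>v \<in> V\<close> by (auto simp: dominating_def)
next
  fix w assume "w \<in> V"
  then have "w \<noteq> u" using \<open>u \<notin> V\<close> by auto
  show "w \<in> insert v (D - {u}) \<or> (\<exists>s\<in>insert v (D - {u}). {w, s} \<in> E)"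
  proof (cases "w \<in> D")
    case False
    then obtain t where t: "t \<in> D" "{w, t} \<in> insert {u, v} E"
      using D \<open>w \<in> V\<close> unfolding dominating_def adjacent_def by blast
    show ?thesis
    proof (cases "{w, t} = {u, v}")
      case True
      then show ?thesis using \<open>w \<noteq> u\<close> by (auto simp: doubleton_eq_iff)
    next
      case False
      then have "{w, t} \<in> E" using t by auto
      then have "t \<in> V" using graph_edge_in_vertices[OF g] by (metis insert_commute)
      then show ?thesis using t \<open>{w, t} \<in> E\<close> \<open>u \<notin> V\<close> by auto
    qed
  qed (use \<open>w \<noteq> u\<close> in auto)
qed

lemma card_insert_Diff_le:
  assumes "finite D" "u \<in> D \<or> v \<in> D"
  shows "card (insert v (D - {u})) \<le> card D"
proof (cases "u \<in> D")
  case True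
  then have "card (insert v (D - {u})) \<le> Suc (card (D - {u}))" by (simp add: card_insert_le_m1)
  also have "\<dots> = card D" using True assms(1) by (metis card_Suc_Diff1)
  finally show ?thesis .
qed (use assms in \<open>simp add: insert_absorb\<close>)

lemma domination_number_pendant_le:
  assumes "finite V"
  shows "domination_number (insert u V) (insert {u, v} E) \<le> domination_number V E + 1"
proof -
  obtain S where S: "mds V E S" using mds_exists[OF assms] by blast
  then have "finite S" using assms by (auto simp: mds_def dominating_def intro: finite_subset)
  have "domination_number (insert u V) (insert {u, v} E) \<le> card (insert u S)"
    using S assms by (intro domination_number_le_card dominating_pendant_insert_pendant)
      (auto simp: mds_def)
  also have "\<dots> \<le> card S + 1" using \<open>finite S\<close> by (simp add: card_insert_if)
  finally show ?thesis using S by (simp add: mds_def)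
qed

lemma dominating_through_root_card_le_pendant:
  assumes "graph V E" "u \<notin> V" "v \<in> V"
  obtains T where "dominating V E T" "v \<in> T"
    "card T \<le> domination_number (insert u V) (insert {u, v} E)"
proof -
  have "finite (insert u V)" using assms(1) by (simp add: graph_def)
  then obtain D where D: "mds (insert u V) (insert {u, v} E) D" using mds_exists by blast
  then have "finite D" using \<open>finite (insert u V)\<close>
    by (auto simp: mds_def dominating_def intro: finite_subset)
  have "u \<in> D \<or> v \<in> D"
    using D assms by (intro dominating_pendant_contains_pendant_or_root) (auto simp: mds_def)
  then have "card (insert v (D - {u})) \<le> domination_number (insert u V) (insert {u, v} E)"
    using card_insert_Diff_le[OF \<open>finite D\<close>] D by (simp add: mds_def)
  moreover have "dominating V E (insert v (D - {u}))"
    using D assms by (intro dominating_replace_pendant_by_root) (auto simp: mds_def)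
  ultimately show ?thesis using that by blast
qed

lemma domination_number_le_pendant:
  assumes "graph V E" "u \<notin> V" "v \<in> V"
  shows "domination_number V E \<le> domination_number (insert u V) (insert {u, v} E)"
proof -
  have "finite V" using assms(1) by (simp add: graph_def)
  obtain T where "dominating V E T"
    "card T \<le> domination_number (insert u V) (insert {u, v} E)"
    using dominating_through_root_card_le_pendant[OF assms] .
  then show ?thesis using domination_number_le_card[OF \<open>finite V\<close>] by fastforce
qed

lemma corona_iff_domination_number_pendant_le:
  assumes "graph V E" "u \<notin> V" "v \<in> V"
  shows "v \<in> corona V E \<longleftrightarrow>
    domination_number (insert u V) (insert {u, v} E) \<le> domination_number V E"
proof
  assume "v \<in> corona V E"
  then obtain S where S: "mds V E S" "v \<in> S" by (auto simp: corona_def)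
  have "finite (insert u V)" using assms(1) by (simp add: graph_def)
  then show "domination_number (insert u V) (insert {u, v} E) \<le> domination_number V E"
    using S by (metis domination_number_le_card dominating_pendant_if_contains_root mds_def)
next
  assume le: "domination_number (insert u V) (insert {u, v} E) \<le> domination_number V E"
  obtain T where "dominating V E T" "v \<in> T"
    "card T \<le> domination_number (insert u V) (insert {u, v} E)"
    using dominating_through_root_card_le_pendant[OF assms] .
  moreover have "finite V" using assms(1) by (simp add: graph_def)
  ultimately have "mds V E T" using le by (simp add: mds_iff_card_le)
  then show "v \<in> corona V E" using \<open>v \<in> T\<close> assms(3) by (auto simp: corona_def)
qed

theorem theorem3:
  fixes V :: "'a set" and E :: "'a set set" and v u :: 'a
  assumes "graph V E" and "v \<in> V" and "u \<notin> V"
  shows "v \<in> anticore V E \<longleftrightarrow>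
    domination_number (insert u V) (insert {u, v} E) = domination_number V E + 1"
proof -
  have "finite V" using assms(1) by (simp add: graph_def)
  then show ?thesis
    using domination_number_pendant_le[of V u v E]
      domination_number_le_pendant[OF assms(1,3,2)]
      corona_iff_domination_number_pendant_le[OF assms(1,3,2)] assms(2)
    by (auto simp: anticore_def)
qed

end
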